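(* Let $M\ge 0$, $\mathcal{M}=\{0,\dots,M\}$, $T\ge 1$, $c_u,c_l>0$, $0\le\beta\le 1$, and let $(B_t)_{t\ge 0}$ be a Markov chain on $\mathcal{M}$ with known stochastic transition matrix $P$ (rows $P_{s,\cdot}$) and known initial state $B_0=s_0$. At each time $t=1,\dots,T$ a decision-maker chooses an action $r_t\in\mathcal{M}$ as a function of $s_0$ and all past actions and observations, incurring cost $C(B_t;r_t)=c_u(r_t-B_t)$ if $r_t>B_t$ and $C(B_t;r_t)=c_l(B_t-r_t)$ if $r_t\le B_t$; if $r_t>B_t$ the value $B_t$ is observed, while if $r_t\le B_t$ only the fact that $B_t\ge r_t$ is observed. Let $W^{opt}_0(s_0)$ be the minimum over all such policies of $\mathbb{E}\{\sum_{t=1}^T\beta^{t-1}C(B_t;r_t)\mid B_0=s_0\}$. For a probability vector $b$ let $\bar C(b;r)=c_l\sum_{i=r}^M b(i)(i-r)+c_u\sum_{i=0}^{r-1}b(i)(r-i)$ and $\pi^{myopic}(b)=\min\{r\in\mathcal{M}:\sum_{i=0}^r b(i)\ge \frac{c_l}{c_l+c_u}\}$, and define for $s\in\mathcal{M}$ $$W^{FO}_{T-1}(s)=\bar C(P_{s,\cdot};\pi^{myopic}(P_{s,\cdot})),$$ $$W^{FO}_t(s)=\bar C(P_{s,\cdot};\pi^{myopic}(P_{s,\cdot}))+\beta\sum_{i=0}^M P_{s,i}\,W^{FO}_{t+1}(i),\quad t=0,\dots,T-2.$$ Then $W^{opt}_0(s_0)\ge W^{FO}_0(s_0)$.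
   Context: $W^{FO}_0(s_0)$ is the expected discounted cost of a genie policy that observes the actual state at every time step with one unit of delay and plays the myopic action. *)

theory Defs
  imports Complex_Main
begin

text \<open>States and actions are naturals in {0..M}; the transition matrix is
  P :: nat => nat => real, with P s i the probability of moving from s to i.\<close>

definition stochastic :: "nat \<Rightarrow> (nat \<Rightarrow> nat \<Rightarrow> real) \<Rightarrow> bool" where
  "stochastic M P \<longleftrightarrow> (\<forall>s\<le>M. (\<forall>i\<le>M. P s i \<ge> 0) \<and> (\<Sum>i\<le>M. P s i) = 1)"

definition cost :: "real \<Rightarrow> real \<Rightarrow> nat \<Rightarrow> nat \<Rightarrow> real" where
  "cost cu cl b r = (if r > b then cu * (real r - real b) else cl * (real b - real r))"

text \<open>Observation after playing r when the state is b: the exact value b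
  if r > b, otherwise only the censoring event B >= r (encoded as None; r is
  known from the action history).\<close>
definition obs :: "nat \<Rightarrow> nat \<Rightarrow> nat option" where
  "obs r b = (if r > b then Some b else None)"

type_synonym hist = "(nat \<times> nat option) list"
type_synonym policy = "hist \<Rightarrow> nat"

text \<open>A policy maps the history of past (action, observation) pairs to the next
  action (s0 is fixed, so dependence on it is implicit). Admissible: actions in {0..M}.\<close>
definition admissible :: "nat \<Rightarrow> policy \<Rightarrow> bool" where
  "admissible M pol \<longleftrightarrow> (\<forall>h. pol h \<le> M)"

text \<open>Expected discounted cost of a policy over n remaining steps, given the
  past history h and current (hidden) state s of the chain:
  Vpol ... h s n = E[ sum_{k=1}^n beta^(k-1) C(B_k; r_k) | current state s ].\<close>
fun Vpol :: "nat \<Rightarrow> (nat \<Rightarrow> nat \<Rightarrow> real) \<Rightarrow> real \<Rightarrow> real \<Rightarrow> real \<Rightarrow> policy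
              \<Rightarrow> hist \<Rightarrow> nat \<Rightarrow> nat \<Rightarrow> real" where
  "Vpol M P cu cl \<beta> pol h s 0 = 0"
| "Vpol M P cu cl \<beta> pol h s (Suc n) =
     (let r = pol h in
      (\<Sum>i\<le>M. P s i * (cost cu cl i r + \<beta> * Vpol M P cu cl \<beta> pol (h @ [(r, obs r i)]) i n)))"

definition Wopt :: "nat \<Rightarrow> (nat \<Rightarrow> nat \<Rightarrow> real) \<Rightarrow> real \<Rightarrow> real \<Rightarrow> real \<Rightarrow> nat \<Rightarrow> nat \<Rightarrow> real" where
  "Wopt M P cu cl \<beta> T s0 = (INF pol \<in> {pol. admissible M pol}. Vpol M P cu cl \<beta> pol [] s0 T)"

definition Cbar :: "nat \<Rightarrow> real \<Rightarrow> real \<Rightarrow> (nat \<Rightarrow> real) \<Rightarrow> nat \<Rightarrow> real" where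
  "Cbar M cu cl b r = cl * (\<Sum>i\<in>{r..M}. b i * (real i - real r))
                    + cu * (\<Sum>i\<in>{0..<r}. b i * (real r - real i))"

definition myopic :: "nat \<Rightarrow> real \<Rightarrow> real \<Rightarrow> (nat \<Rightarrow> real) \<Rightarrow> nat" where
  "myopic M cu cl b = (LEAST r. r \<le> M \<and> (\<Sum>i\<le>r. b i) \<ge> cl / (cl + cu))"

text \<open>WFO_rem n s = W^FO_{T-n}(s): value with n steps remaining (WFO_rem 0 = 0).\<close>
fun WFO_rem :: "nat \<Rightarrow> (nat \<Rightarrow> nat \<Rightarrow> real) \<Rightarrow> real \<Rightarrow> real \<Rightarrow> real \<Rightarrow> nat \<Rightarrow> nat \<Rightarrow> real" where
  "WFO_rem M P cu cl \<beta> 0 s = 0"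
| "WFO_rem M P cu cl \<beta> (Suc n) s =
     Cbar M cu cl (P s) (myopic M cu cl (P s)) + \<beta> * (\<Sum>i\<le>M. P s i * WFO_rem M P cu cl \<beta> n i)"

definition WFO :: "nat \<Rightarrow> (nat \<Rightarrow> nat \<Rightarrow> real) \<Rightarrow> real \<Rightarrow> real \<Rightarrow> real \<Rightarrow> nat \<Rightarrow> nat \<Rightarrow> nat \<Rightarrow> real" where
  "WFO M P cu cl \<beta> T t s = WFO_rem M P cu cl \<beta> (T - t) s"

end

theory Submission
  imports Defs
begin

text \<open>The genie who knows the current state s before acting faces, at each step, the
  newsvendor problem for the known distribution P s, whose expected cost is piecewise
  linear in the action with forward differences (cl + cu) * F(r) - cl, F the distribution
  function; hence it is minimised at the cl / (cl + cu) quantile, the myopic action.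
  Conditioning on the hidden state, the cost of any policy therefore dominates the
  genie's one-step cost plus the discounted expected continuation, and induction on the
  number of remaining steps gives the bound.\<close>

definition expected_cost :: "nat \<Rightarrow> real \<Rightarrow> real \<Rightarrow> (nat \<Rightarrow> real) \<Rightarrow> nat \<Rightarrow> real" where
  "expected_cost M cu cl b r = (\<Sum>i\<le>M. b i * cost cu cl i r)"

lemma min_at_sign_change:
  fixes f :: "nat \<Rightarrow> 'a::order"
  assumes decr: "\<And>n. n < m \<Longrightarrow> f (Suc n) \<le> f n"
    and incr: "\<And>n. m \<le> n \<Longrightarrow> n < N \<Longrightarrow> f n \<le> f (Suc n)"
    and "r \<le> N"
  shows "f m \<le> f r"
proof (cases "r \<le> m")
  case True
  then show ?thesis
  proof (induction r rule: inc_induct)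
    case (step n)
    then show ?case using decr[of n] by (meson order_trans)
  qed simp
next
  case False
  then have "m \<le> r" by simp
  then show ?thesis
  proof (induction r rule: dec_induct)
    case (step n)
    then have "n < N" using \<open>r \<le> N\<close> by simp
    then show ?case using step incr[of n] by (meson order_trans)
  qed simp
qed

lemma cost_Suc_diff: "cost cu cl i (Suc r) - cost cu cl i r = (if i \<le> r then cu else - cl)"
  by (cases "i \<le> r"; cases "i = r") (auto simp: cost_def algebra_simps)

lemma expected_cost_Suc_diff:
  assumes "r < M" and sum1: "(\<Sum>i\<le>M. b i) = 1"
  shows "expected_cost M cu cl b (Suc r) - expected_cost M cu cl b r
         = (cl + cu) * (\<Sum>i\<le>r. b i) - cl"
proof -
  have "expected_cost M cu cl b (Suc r) - expected_cost M cu cl b r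
        = (\<Sum>i\<le>M. (cl + cu) * (if i \<le> r then b i else 0) - cl * b i)"
    unfolding expected_cost_def sum_subtractf[symmetric]
    by (rule sum.cong) (auto simp: right_diff_distrib[symmetric] cost_Suc_diff algebra_simps)
  also have "\<dots> = (cl + cu) * (\<Sum>i\<in>{..M} \<inter> {i. i \<le> r}. b i) - cl * (\<Sum>i\<le>M. b i)"
    by (simp add: sum_subtractf sum_distrib_left sum.inter_restrict)
  also have "{..M} \<inter> {i. i \<le> r} = {..r}" using \<open>r < M\<close> by auto
  finally show ?thesis using sum1 by simp
qed

lemma Cbar_eq_expected_cost:
  assumes "r \<le> M"
  shows "Cbar M cu cl b r = expected_cost M cu cl b r"
proof -
  have split: "{..M} = {0..<r} \<union> {r..M}" using assms by auto
  have "expected_cost M cu cl b r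
      = (\<Sum>i\<in>{0..<r}. b i * cost cu cl i r) + (\<Sum>i\<in>{r..M}. b i * cost cu cl i r)"
    unfolding expected_cost_def split by (rule sum.union_disjoint) auto
  also have "\<dots> = cu * (\<Sum>i\<in>{0..<r}. b i * (real r - real i))
                  + cl * (\<Sum>i\<in>{r..M}. b i * (real i - real r))"
    by (simp add: sum_distrib_left cost_def algebra_simps)
  finally show ?thesis unfolding Cbar_def by simp
qed

lemma
  assumes "cu > 0" and "cl > 0" and "(\<Sum>i\<le>M. b i) = 1"
  shows myopic_le: "myopic M cu cl b \<le> M"
    and myopic_quantile: "(\<Sum>i\<le>myopic M cu cl b. b i) \<ge> cl / (cl + cu)"
    and less_myopic_below_quantile:
      "n < myopic M cu cl b \<Longrightarrow> (\<Sum>i\<le>n. b i) < cl / (cl + cu)"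
proof -
  let ?P = "\<lambda>r. r \<le> M \<and> (\<Sum>i\<le>r. b i) \<ge> cl / (cl + cu)"
  have "?P M" using assms by simp
  then have "?P (LEAST r. ?P r)" by (rule LeastI)
  then show "myopic M cu cl b \<le> M" "(\<Sum>i\<le>myopic M cu cl b. b i) \<ge> cl / (cl + cu)"
    unfolding myopic_def by auto
  then show "n < myopic M cu cl b \<Longrightarrow> (\<Sum>i\<le>n. b i) < cl / (cl + cu)"
    unfolding myopic_def using not_less_Least[of n] by fastforce
qed

lemma expected_cost_myopic_le:
  assumes nonneg: "\<forall>i\<le>M. b i \<ge> 0" and sum1: "(\<Sum>i\<le>M. b i) = 1"
    and "cu > 0" and "cl > 0" and "r \<le> M"
  shows "expected_cost M cu cl b (myopic M cu cl b) \<le> expected_cost M cu cl b r"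
proof (rule min_at_sign_change[where N = M])
  let ?m = "myopic M cu cl b"
  have pos: "cl + cu > 0" using assms by simp
  fix n
  show "n < ?m \<Longrightarrow> expected_cost M cu cl b (Suc n) \<le> expected_cost M cu cl b n"
  proof -
    assume "n < ?m"
    then have "(cl + cu) * (\<Sum>i\<le>n. b i) < cl"
      using less_myopic_below_quantile[OF \<open>cu > 0\<close> \<open>cl > 0\<close> sum1] pos
      by (simp add: pos_less_divide_eq mult.commute)
    moreover have "n < M" using \<open>n < ?m\<close> myopic_le[OF \<open>cu > 0\<close> \<open>cl > 0\<close> sum1] by simp
    ultimately show ?thesis using expected_cost_Suc_diff[OF _ sum1, of n cu cl] by simp
  qed
  show "?m \<le> n \<Longrightarrow> n < M \<Longrightarrow> expected_cost M cu cl b n \<le> expected_cost M cu cl b (Suc n)"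
  proof -
    assume "?m \<le> n" "n < M"
    have "(\<Sum>i\<le>?m. b i) \<le> (\<Sum>i\<le>n. b i)"
      by (rule sum_mono2) (use \<open>?m \<le> n\<close> \<open>n < M\<close> nonneg in auto)
    moreover have "cl \<le> (cl + cu) * (\<Sum>i\<le>?m. b i)"
      using myopic_quantile[OF \<open>cu > 0\<close> \<open>cl > 0\<close> sum1] pos
      by (simp add: divide_le_eq mult.commute)
    ultimately have "(cl + cu) * (\<Sum>i\<le>n. b i) \<ge> cl"
      using pos by (meson mult_left_mono order_trans less_imp_le)
    then show ?thesis using expected_cost_Suc_diff[OF \<open>n < M\<close> sum1, of cu cl] by simp
  qed
qed (use assms in simp)

lemma Vpol_Suc_eq:
  "Vpol M P cu cl \<beta> pol h s (Suc n)
   = expected_cost M cu cl (P s) (pol h)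
     + \<beta> * (\<Sum>i\<le>M. P s i * Vpol M P cu cl \<beta> pol (h @ [(pol h, obs (pol h) i)]) i n)"
  by (simp add: Let_def expected_cost_def distrib_left sum.distrib sum_distrib_left algebra_simps)

lemma WFO_rem_le_Vpol:
  assumes "admissible M pol" and "cu > 0" and "cl > 0" and "0 \<le> \<beta>"
    and "stochastic M P" and "s \<le> M"
  shows "WFO_rem M P cu cl \<beta> n s \<le> Vpol M P cu cl \<beta> pol h s n"
  using \<open>s \<le> M\<close>
proof (induction n arbitrary: h s)
  case (Suc n)
  have nonneg: "\<forall>i\<le>M. P s i \<ge> 0" and sum1: "(\<Sum>i\<le>M. P s i) = 1"
    using \<open>stochastic M P\<close> Suc.prems by (auto simp: stochastic_def)
  have "Cbar M cu cl (P s) (myopic M cu cl (P s)) \<le> expected_cost M cu cl (P s) (pol h)"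
    using \<open>admissible M pol\<close> Cbar_eq_expected_cost[OF myopic_le[OF \<open>cu > 0\<close> \<open>cl > 0\<close> sum1]]
      expected_cost_myopic_le[OF nonneg sum1 \<open>cu > 0\<close> \<open>cl > 0\<close>]
    by (simp add: admissible_def)
  moreover have "(\<Sum>i\<le>M. P s i * WFO_rem M P cu cl \<beta> n i)
      \<le> (\<Sum>i\<le>M. P s i * Vpol M P cu cl \<beta> pol (h @ [(pol h, obs (pol h) i)]) i n)"
    by (rule sum_mono) (use nonneg Suc.IH in \<open>auto intro: mult_left_mono\<close>)
  ultimately show ?case
    using \<open>0 \<le> \<beta>\<close> by (simp only: WFO_rem.simps Vpol_Suc_eq) (intro add_mono mult_left_mono)
qed simp

theorem proposition5:
  fixes M T s0 :: nat and P :: "nat \<Rightarrow> nat \<Rightarrow> real" and cu cl \<beta> :: real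
  assumes "T \<ge> 1" and "cu > 0" and "cl > 0" and "0 \<le> \<beta>" and "\<beta> \<le> 1"
    and "stochastic M P" and "s0 \<le> M"
  shows "Wopt M P cu cl \<beta> T s0 \<ge> WFO M P cu cl \<beta> T 0 s0"
  unfolding Wopt_def WFO_def diff_zero
proof (rule cINF_greatest)
  show "{pol. admissible M pol} \<noteq> {}"
    using admissible_def[of M "\<lambda>_. 0"] by auto
  show "WFO_rem M P cu cl \<beta> T s0 \<le> Vpol M P cu cl \<beta> pol [] s0 T"
    if "pol \<in> {pol. admissible M pol}" for pol
    using that WFO_rem_le_Vpol assms by simp
qed

end
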